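(* Let $p\neq 3$ be a prime, let $r\geq 7$, and let $C(x_1,\ldots,x_r)=a_1x_1^3+a_2x_2^3+\cdots+a_rx_r^3$ with $a_1,\ldots,a_r$ integers and $a_1a_2\cdots a_r\neq 0$. Then $R(C)$ is dense in $\mathbb{Q}_p$.
   Context: For an integral form $F$ in $r$ variables, $R(F)=\{F(\overline{x})/F(\overline{y}):\overline{x},\overline{y}\in\mathbb{Z}^r,\ F(\overline{y})\neq 0\}$, viewed as a subset of the field $\mathbb{Q}_p$ of $p$-adic numbers with its $p$-adic topology. *)

theory Defs
  imports Complex_Main "HOL-Computational_Algebra.Computational_Algebra"
begin

definition padic_val :: "nat \<Rightarrow> rat \<Rightarrow> int" where
  "padic_val p q = (case quotient_of q of (a, b) \<Rightarrow>
      int (multiplicity (int p) a) - int (multiplicity (int p) b))"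

definition padic_abs :: "nat \<Rightarrow> rat \<Rightarrow> real" where
  "padic_abs p q = (if q = 0 then 0 else real p powr (- real_of_int (padic_val p q)))"

(* R(F) = { F(x)/F(y) : x, y in Z^r, F(y) \<noteq> 0 } for a form F : Z^r -> Z,
   integer vectors of length r represented as functions nat => int (only
   coordinates i < r matter for the forms considered) *)
definition ratio_set :: "((nat \<Rightarrow> int) \<Rightarrow> int) \<Rightarrow> rat set" where
  "ratio_set F = {of_int (F x) / of_int (F y) | x y. F y \<noteq> 0}"

definition diag_cubic :: "nat \<Rightarrow> (nat \<Rightarrow> int) \<Rightarrow> (nat \<Rightarrow> int) \<Rightarrow> int" where
  "diag_cubic r a x = (\<Sum>i<r. a i * x i ^ 3)"

(* A set S of rationals is dense in Q_p.  Since Q is dense in Q_p, this holds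
   iff every rational can be approximated arbitrarily well p-adically by
   elements of S. *)
definition padic_dense :: "nat \<Rightarrow> rat set \<Rightarrow> bool" where
  "padic_dense p S \<longleftrightarrow> (\<forall>q::rat. \<forall>e::real. e > 0 \<longrightarrow> (\<exists>s\<in>S. padic_abs p (s - q) < e))"

end

theory Submission
  imports Defs "HOL-Number_Theory.Number_Theory"
begin

(* Every element of Q_p is a limit of rationals, so it suffices to approximate a rational m/n
   p-adically by quotients C(x)/C(y).  Among seven nonzero coefficients, three have p-adic
   valuations congruent mod 3; rescaling their variables by powers of p gives them a common
   valuation V, and a diagonal ternary cubic with unit coefficients has a nontrivial zero mod p
   (for p = 2 mod 3 every unit is a cube, for p = 1 mod 3 a counting argument on the cubic
   residue classes applies).  This yields w such that one term a_i w_i^3 has valuation exactly e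
   while p^(e+1) divides C(w).  As p <> 3, Newton's method in the variable x_i lifts w to a zero
   of C modulo p^(e+2M).  Replacing w_i by w_i (1 + p^M t) then gives
   C = p^(e+M) (3 u t + p^M R(t)) with u a unit, so the values at t = m and t = n have ratio
   m/n + O(p^(M - 2 v_p(n))). *)

section \<open>Units modulo a prime\<close>

lemma prime_not_dvd_one:
  assumes "prime p"
  shows "\<not> int p dvd 1"
  using prime_gt_1_nat[OF assms] by simp

lemma prime_not_dvd_3:
  assumes "prime p" and "p \<noteq> 3"
  shows "\<not> int p dvd 3"
proof
  assume "int p dvd 3"
  hence "p dvd 3" by (metis int_dvd_int_iff of_nat_numeral)
  with assms show False using primes_dvd_imp_eq[of p 3] by simp
qed

lemma prime_mod_3_cases:
  fixes p :: nat
  assumes "prime p" and "p \<noteq> 3"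
  shows "p mod 3 = 1 \<or> p mod 3 = 2"
proof -
  have "\<not> 3 dvd p"
    using assms primes_dvd_imp_eq[of 3 p] by auto
  thus ?thesis by presburger
qed

lemma coprime_if_not_prime_dvd:
  assumes "prime p" and "\<not> int p dvd t"
  shows "coprime t (int p)"
proof -
  have "prime (int p)" using assms(1) by simp
  thus ?thesis using assms(2) by (metis prime_imp_coprime coprime_commute)
qed

lemma prime_not_dvd_mult:
  assumes "prime p" and "\<not> int p dvd s" and "\<not> int p dvd t"
  shows "\<not> int p dvd s * t"
proof -
  have "prime (int p)" using assms(1) by simp
  thus ?thesis using assms(2,3) by (simp add: prime_dvd_mult_iff)
qed

lemma prime_not_dvd_modular_inverse:
  assumes "prime p" and "\<not> int p dvd t"
  shows "\<not> int p dvd modular_inverse (int p) t"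
proof
  assume "int p dvd modular_inverse (int p) t"
  moreover have "coprime (modular_inverse (int p) t) (int p)"
    using coprime_if_not_prime_dvd[OF assms] by simp
  ultimately have "is_unit (int p)" by (meson coprime_common_divisor dvd_refl)
  thus False using assms(1) by simp
qed

lemma cong_modular_inverse_prime:
  assumes "prime p" and "\<not> int p dvd t"
  shows "[t * modular_inverse (int p) t = 1] (mod int p)"
  using coprime_if_not_prime_dvd[OF assms] by (rule cong_modular_inverse1)

lemma modular_inverse_cong_imp_cong:
  assumes "prime p" and "\<not> int p dvd s" and "\<not> int p dvd t"
    and "[modular_inverse (int p) s = modular_inverse (int p) t] (mod int p)"
  shows "[s = t] (mod int p)"
proof -
  let ?i = "modular_inverse (int p)"
  have "[s = s * (t * ?i t)] (mod int p)"
    using cong_mult[OF cong_refl[of s] cong_modular_inverse_prime[OF assms(1,3)]]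
    by (simp add: cong_sym_eq)
  also have "s * (t * ?i t) = t * (s * ?i t)" by simp
  also have "[t * (s * ?i t) = t * (s * ?i s)] (mod int p)"
    by (intro cong_mult cong_refl) (simp add: assms(4) cong_sym)
  also have "[t * (s * ?i s) = t * 1] (mod int p)"
    by (intro cong_mult cong_refl cong_modular_inverse_prime assms(1,2))
  finally show ?thesis by simp
qed

lemma fermat_theorem_int:
  assumes "prime p" and "\<not> int p dvd t"
  shows "[t ^ (p - 1) = 1] (mod int p)"
proof -
  have "residues (int p)"
    using prime_gt_1_nat[OF assms(1)] by (simp add: residues_def)
  hence "[t ^ totient (nat (int p)) = 1] (mod int p)"
    using coprime_if_not_prime_dvd[OF assms] by (rule residues.euler_theorem)
  thus ?thesis using assms(1) by (simp add: totient_prime)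
qed

lemma cube_root_mod_prime_2_mod_3:
  assumes "prime p" and "p mod 3 = 2" and "\<not> int p dvd t"
  shows "[(t ^ ((2 * p - 1) div 3)) ^ 3 = t] (mod int p)"
proof -
  have "3 * ((2 * p - 1) div 3) = 2 * (p - 1) + 1"
    using assms(2) prime_ge_2_nat[OF assms(1)] by presburger
  hence "(t ^ ((2 * p - 1) div 3)) ^ 3 = t * (t ^ (p - 1)) ^ 2"
    by (metis power_mult mult.commute power_add power_one_right)
  also have "[\<dots> = t * 1 ^ 2] (mod int p)"
    by (intro cong_mult cong_pow cong_refl fermat_theorem_int assms(1,3))
  finally show ?thesis by simp
qed

lemma cube_multiple_mod_prime_2_mod_3:
  assumes "prime p" and "p mod 3 = 2" and "\<not> int p dvd v" and "\<not> int p dvd t"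
  shows "\<exists>y. [v * y ^ 3 = t] (mod int p)"
proof -
  define v' where "v' = modular_inverse (int p) v"
  have "\<not> int p dvd t * v'"
    using prime_not_dvd_mult[OF assms(1,4) prime_not_dvd_modular_inverse[OF assms(1,3)]]
    by (simp add: v'_def)
  hence "[v * ((t * v') ^ ((2 * p - 1) div 3)) ^ 3 = v * (t * v')] (mod int p)"
    using cube_root_mod_prime_2_mod_3[OF assms(1,2)] by (intro cong_mult cong_refl)
  also have "v * (t * v') = t * (v * v')" by simp
  also have "[t * (v * v') = t * 1] (mod int p)"
    using cong_modular_inverse_prime[OF assms(1,3)]
    by (intro cong_mult cong_refl) (simp add: v'_def)
  finally show ?thesis by auto
qed

section \<open>Cubic residue classes modulo a prime \<open>p \<equiv> 1 (mod 3)\<close>\<close>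

(* The discrete logarithm of t to the base g, reduced mod 3.  For a primitive root g modulo a
   prime p = 1 (mod 3) it is well defined on units, and the units of class 0 are exactly the
   cubes; on multiples of p its value is meaningless. *)
definition cube_class :: "nat \<Rightarrow> nat \<Rightarrow> int \<Rightarrow> nat" where
  "cube_class p g t = (SOME k. [int g ^ k = t] (mod int p)) mod 3"

lemma cube_class_less_3: "cube_class p g t < 3"
  by (simp add: cube_class_def)

lemma cube_class_cases: "cube_class p g t \<in> {0, 1, 2}"
  using cube_class_less_3[of p g t] by auto

definition cube_class_residues :: "nat \<Rightarrow> nat \<Rightarrow> nat \<Rightarrow> int set" where
  "cube_class_residues p g j = {x \<in> {1..int p - 1}. cube_class p g x = j}"

lemma finite_cube_class_residues: "finite (cube_class_residues p g j)"
  by (rule finite_subset[of _ "{1..int p - 1}"]) (auto simp: cube_class_residues_def)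

locale prime_1_mod_3_primroot =
  fixes p g :: nat
  assumes prime: "prime p" and primroot: "residue_primroot p g" and one_mod_3: "p mod 3 = 1"
begin

lemma exists_primroot_power_cong:
  assumes "\<not> int p dvd t"
  shows "\<exists>k. [int g ^ k = t] (mod int p)"
proof -
  have p1: "p > 1" using prime prime_gt_1_nat by blast
  define s where "s = nat (t mod int p)"
  have st: "int s = t mod int p" unfolding s_def using p1 by simp
  have "\<not> p dvd s"
  proof
    assume "p dvd s"
    hence "int p dvd t mod int p" using st by (metis int_dvd_int_iff)
    thus False using assms by (simp add: dvd_mod_iff)
  qed
  moreover have "int s < int p" using st p1 by simp
  ultimately have "s \<in> totatives p"
    using prime by (auto simp: totatives_def prime_imp_coprime coprime_commute intro!: Nat.gr0I)
  then obtain k where "s = g ^ k mod p"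
    using residue_primroot_is_generator[OF p1 primroot] by (auto simp: bij_betw_def)
  hence "int g ^ k mod int p = t mod int p" using st by (simp add: of_nat_mod)
  thus ?thesis by (auto simp: cong_def)
qed

lemma primroot_exponent_cong_mod_3:
  assumes "[int g ^ k = int g ^ l] (mod int p)"
  shows "[k = l] (mod 3)"
proof -
  have "[g ^ k = g ^ l] (mod p)" using assms by (metis cong_int_iff of_nat_power)
  moreover have "coprime p g" using primroot by (simp add: residue_primroot_def)
  ultimately have "[k = l] (mod ord p g)" using order_divides_expdiff by blast
  moreover have "ord p g = p - 1"
    using primroot prime by (simp add: residue_primroot_def totient_prime)
  moreover have "3 dvd p - 1" using one_mod_3 by presburger
  ultimately show ?thesis using cong_dvd_modulus_nat by metis
qed

lemma cube_class_eqI: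
  assumes "[int g ^ k = t] (mod int p)"
  shows "cube_class p g t = k mod 3"
proof -
  define l where "l = (SOME l. [int g ^ l = t] (mod int p))"
  have "[int g ^ l = t] (mod int p)" unfolding l_def using assms by (rule someI)
  hence "[k = l] (mod 3)" using assms by (meson cong_sym cong_trans primroot_exponent_cong_mod_3)
  thus ?thesis unfolding cube_class_def l_def[symmetric] by (simp add: cong_def)
qed

lemma cube_class_cong:
  assumes "[s = t] (mod int p)" and "\<not> int p dvd t"
  shows "cube_class p g s = cube_class p g t"
proof -
  obtain k where k: "[int g ^ k = t] (mod int p)" using exists_primroot_power_cong assms(2) by blast
  hence "[int g ^ k = s] (mod int p)" using assms(1) by (meson cong_sym cong_trans)
  thus ?thesis using cube_class_eqI k by simp
qed

lemma cube_class_mult: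
  assumes "\<not> int p dvd s" and "\<not> int p dvd t"
  shows "cube_class p g (s * t) = (cube_class p g s + cube_class p g t) mod 3"
proof -
  obtain k where k: "[int g ^ k = s] (mod int p)" using exists_primroot_power_cong assms(1) by blast
  obtain l where l: "[int g ^ l = t] (mod int p)" using exists_primroot_power_cong assms(2) by blast
  have "[int g ^ (k + l) = s * t] (mod int p)" using cong_mult[OF k l] by (simp add: power_add)
  thus ?thesis using cube_class_eqI k l by (simp add: mod_add_eq)
qed

lemma cube_class_one: "cube_class p g 1 = 0"
  using cube_class_eqI[of 0 1] by simp

lemma cube_class_cube:
  assumes "\<not> int p dvd y"
  shows "cube_class p g (y ^ 3) = 0"
proof -
  obtain k where "[int g ^ k = y] (mod int p)" using exists_primroot_power_cong assms by blast
  hence "[int g ^ (3 * k) = y ^ 3] (mod int p)"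
    by (metis cong_pow power_mult mult.commute)
  thus ?thesis using cube_class_eqI by simp
qed

lemma cube_class_uminus:
  assumes "\<not> int p dvd z"
  shows "cube_class p g (- z) = cube_class p g z"
proof -
  have "cube_class p g ((- 1) ^ 3 * z) = cube_class p g z"
    using cube_class_mult[of "(- 1) ^ 3" z] cube_class_cube[of "- 1"] cube_class_less_3 assms
      prime_not_dvd_one[OF prime]
    by simp
  thus ?thesis by simp
qed

lemma cube_class_modular_inverse:
  assumes "\<not> int p dvd v"
  shows "(cube_class p g v + cube_class p g (modular_inverse (int p) v)) mod 3 = 0"
  using cube_class_cong[OF cong_modular_inverse_prime[OF prime assms] prime_not_dvd_one[OF prime]]
    cube_class_mult[OF assms prime_not_dvd_modular_inverse[OF prime assms]] cube_class_one
  by simp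

lemma cube_class_eq_0_imp_cube:
  assumes "\<not> int p dvd t" and "cube_class p g t = 0"
  shows "\<exists>y. [y ^ 3 = t] (mod int p)"
proof -
  obtain k where k: "[int g ^ k = t] (mod int p)" using exists_primroot_power_cong assms(1) by blast
  hence "3 dvd k" using cube_class_eqI assms(2) by auto
  hence "(int g ^ (k div 3)) ^ 3 = int g ^ k" by (simp add: power_mult[symmetric])
  thus ?thesis using k by metis
qed

lemma cube_class_eq_imp_cube_multiple:
  assumes "\<not> int p dvd v" and "\<not> int p dvd t" and "cube_class p g v = cube_class p g t"
  shows "\<exists>y. [v * y ^ 3 = t] (mod int p)"
proof -
  define v' where "v' = modular_inverse (int p) v"
  have v': "\<not> int p dvd v'" "[v * v' = 1] (mod int p)"
    unfolding v'_def using prime_not_dvd_modular_inverse cong_modular_inverse_prime prime assms(1)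
    by blast+
  have "cube_class p g (t * v') = 0"
    using cube_class_mult[OF assms(2) v'(1)] cube_class_modular_inverse[OF assms(1)] assms(3)
    unfolding v'_def by simp
  then obtain y where y: "[y ^ 3 = t * v'] (mod int p)"
    using cube_class_eq_0_imp_cube prime_not_dvd_mult[OF prime assms(2) v'(1)] by blast
  have "[v * y ^ 3 = v * (t * v')] (mod int p)" by (intro cong_mult cong_refl y)
  also have "v * (t * v') = t * (v * v')" by simp
  also have "[t * (v * v') = t * 1] (mod int p)" by (intro cong_mult cong_refl v'(2))
  finally show ?thesis by auto
qed

lemma not_dvd_primroot_power: "\<not> int p dvd int g ^ j"
proof
  assume "int p dvd int g ^ j"
  hence "p dvd g" using prime by (metis int_dvd_int_iff of_nat_power prime_dvd_power)
  moreover have "coprime p g" using primroot by (simp add: residue_primroot_def)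
  ultimately show False using prime by (meson coprime_common_divisor dvd_refl not_prime_unit)
qed

lemma cube_class_residuesD:
  assumes "x \<in> cube_class_residues p g j"
  shows "\<not> int p dvd x" and "cube_class p g x = j"
proof -
  have "0 < x" "x < int p" using assms by (auto simp: cube_class_residues_def)
  thus "\<not> int p dvd x" using zdvd_imp_le by fastforce
  show "cube_class p g x = j" using assms by (simp add: cube_class_residues_def)
qed

lemma mod_in_cube_class_residues:
  assumes "\<not> int p dvd x"
  shows "x mod int p \<in> cube_class_residues p g (cube_class p g x)"
proof -
  have "x mod int p \<noteq> 0" "0 \<le> x mod int p" "x mod int p < int p"
    using assms prime_gt_1_nat[OF prime] by (auto simp: dvd_eq_mod_eq_0)
  moreover have "cube_class p g (x mod int p) = cube_class p g x"
    using assms by (intro cube_class_cong) (auto simp: cong_def)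
  ultimately show ?thesis by (simp add: cube_class_residues_def)
qed

lemma cube_class_residues_cong_imp_eq:
  assumes "x \<in> cube_class_residues p g i" and "y \<in> cube_class_residues p g j"
    and "[x = y] (mod int p)"
  shows "x = y"
  using assms by (auto simp: cube_class_residues_def cong_def)

lemma card_cube_class_residues_0_le:
  assumes "j < 3"
  shows "card (cube_class_residues p g 0) \<le> card (cube_class_residues p g j)"
proof -
  let ?S = "cube_class_residues p g"
  define h where "h x = int g ^ j * x mod int p" for x
  have class_gj: "cube_class p g (int g ^ j) = j"
    using cube_class_eqI[of j] assms by simp
  have "h ` ?S 0 \<subseteq> ?S j"
  proof
    fix y assume "y \<in> h ` ?S 0"
    then obtain x where x: "x \<in> ?S 0" and y: "y = h x" by blast
    note x' = cube_class_residuesD[OF x]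
    have "\<not> int p dvd int g ^ j * x"
      using prime_not_dvd_mult[OF prime not_dvd_primroot_power x'(1)] .
    moreover have "cube_class p g (int g ^ j * x) = j"
      using cube_class_mult[OF not_dvd_primroot_power x'(1)] class_gj x'(2) assms by simp
    ultimately show "y \<in> ?S j" using mod_in_cube_class_residues y unfolding h_def by metis
  qed
  moreover have "inj_on h (?S 0)"
  proof (rule inj_onI)
    fix x y assume x: "x \<in> ?S 0" and y: "y \<in> ?S 0" and "h x = h y"
    hence "[int g ^ j * x = int g ^ j * y] (mod int p)" by (simp add: h_def cong_def)
    moreover have "coprime (int g ^ j) (int p)"
      using coprime_if_not_prime_dvd[OF prime not_dvd_primroot_power] .
    ultimately have "[x = y] (mod int p)" using cong_mult_lcancel by blast
    thus "x = y" using cube_class_residues_cong_imp_eq x y by blast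
  qed
  ultimately show ?thesis
    using finite_cube_class_residues by (intro card_inj_on_le) auto
qed

lemma not_dvd_one_plus_if_cube_class_ne_0:
  assumes "\<not> int p dvd \<alpha>" and "cube_class p g \<alpha> \<noteq> 0"
  shows "\<not> int p dvd 1 + \<alpha>"
proof
  assume "int p dvd 1 + \<alpha>"
  hence "[\<alpha> = - 1] (mod int p)" by (simp add: cong_iff_dvd_diff add.commute)
  hence "cube_class p g \<alpha> = cube_class p g 1"
    using cube_class_cong cube_class_uminus prime_not_dvd_one[OF prime] by (metis dvd_minus_iff)
  thus False using assms(2) cube_class_one by simp
qed

lemma cube_class_one_plus_modular_inverse:
  assumes "\<not> int p dvd \<alpha>" and "\<not> int p dvd 1 + \<alpha>"
  defines "\<alpha>' \<equiv> modular_inverse (int p) \<alpha>"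
  shows "\<not> int p dvd 1 + \<alpha>'"
    and "cube_class p g (1 + \<alpha>') = (cube_class p g (1 + \<alpha>) + cube_class p g \<alpha>') mod 3"
proof -
  have \<alpha>': "\<not> int p dvd \<alpha>'" "[\<alpha> * \<alpha>' = 1] (mod int p)"
    unfolding \<alpha>'_def using prime_not_dvd_modular_inverse cong_modular_inverse_prime prime assms(1)
    by blast+
  have "(1 + \<alpha>) * \<alpha>' = \<alpha>' + \<alpha> * \<alpha>'" by (simp add: algebra_simps)
  also have "[\<dots> = \<alpha>' + 1] (mod int p)" by (intro cong_add cong_refl \<alpha>'(2))
  finally have eq: "[(1 + \<alpha>) * \<alpha>' = 1 + \<alpha>'] (mod int p)" by (simp add: add.commute)
  have unit: "\<not> int p dvd (1 + \<alpha>) * \<alpha>'"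
    using prime_not_dvd_mult[OF prime assms(2) \<alpha>'(1)] .
  thus unit': "\<not> int p dvd 1 + \<alpha>'" using eq by (metis cong_dvd_iff)
  have "cube_class p g (1 + \<alpha>') = cube_class p g ((1 + \<alpha>) * \<alpha>')"
    using cube_class_cong[OF eq unit'] by simp
  thus "cube_class p g (1 + \<alpha>') = (cube_class p g (1 + \<alpha>) + cube_class p g \<alpha>') mod 3"
    using cube_class_mult[OF assms(2) \<alpha>'(1)] by simp
qed

lemma cube_class_modular_inverse_eq:
  assumes "\<not> int p dvd \<alpha>" and "cube_class p g \<alpha> = d" and "d = 1 \<or> d = 2"
  shows "cube_class p g (modular_inverse (int p) \<alpha>) = (2 * d) mod 3"
  using cube_class_cases[of p g "modular_inverse (int p) \<alpha>"] cube_class_modular_inverse[OF assms(1)]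
    assms(2,3)
  by (auto; presburger)

(* If 1 + \<alpha> does not have class 2d, then 1 + \<alpha> or 1 + \<alpha>^-1 = (1 + \<alpha>)/\<alpha> is a cube other than 1,
   and this choice is injective on the residues of class d. *)
definition cube_partner :: "int \<Rightarrow> int" where
  "cube_partner \<alpha> = (if cube_class p g (1 + \<alpha>) = 0 then 1 + \<alpha> else 1 + modular_inverse (int p) \<alpha>)"

lemma cube_partner_cube:
  assumes d: "d = 1 \<or> d = 2" and \<alpha>: "\<alpha> \<in> cube_class_residues p g d"
    and no_step: "cube_class p g (1 + \<alpha>) \<noteq> (2 * d) mod 3"
  shows "\<not> int p dvd cube_partner \<alpha> \<and> cube_class p g (cube_partner \<alpha>) = 0 \<and>
    \<not> [cube_partner \<alpha> = 1] (mod int p)"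
proof -
  note \<alpha>_unit = cube_class_residuesD(1)[OF \<alpha>] and \<alpha>_class = cube_class_residuesD(2)[OF \<alpha>]
  have unit: "\<not> int p dvd 1 + \<alpha>"
    using not_dvd_one_plus_if_cube_class_ne_0 \<alpha>_unit \<alpha>_class d by auto
  show ?thesis
  proof (cases "cube_class p g (1 + \<alpha>) = 0")
    case True
    thus ?thesis using \<alpha>_unit unit by (simp add: cube_partner_def cong_add_lcancel_0 cong_0_iff)
  next
    case False
    hence "cube_class p g (1 + \<alpha>) = d" using cube_class_cases[of p g "1 + \<alpha>"] no_step d by auto
    hence "cube_class p g (1 + modular_inverse (int p) \<alpha>) = 0"
      using cube_class_one_plus_modular_inverse(2)[OF \<alpha>_unit unit]
        cube_class_modular_inverse_eq[OF \<alpha>_unit \<alpha>_class d] d by auto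
    thus ?thesis
      using False cube_class_one_plus_modular_inverse(1)[OF \<alpha>_unit unit]
        prime_not_dvd_modular_inverse[OF prime \<alpha>_unit]
      by (simp add: cube_partner_def cong_add_lcancel_0 cong_0_iff)
  qed
qed

lemma cube_partner_cong_imp_eq:
  assumes d: "d = 1 \<or> d = 2"
    and \<alpha>: "\<alpha> \<in> cube_class_residues p g d" and \<alpha>': "\<alpha>' \<in> cube_class_residues p g d"
    and eq: "[cube_partner \<alpha> = cube_partner \<alpha>'] (mod int p)"
  shows "\<alpha> = \<alpha>'"
proof -
  let ?cl = "cube_class p g" and ?i = "modular_inverse (int p)"
  note residues = cube_class_residuesD[OF \<alpha>] cube_class_residuesD[OF \<alpha>']
  have mixed: "\<not> [1 + x = 1 + ?i y] (mod int p)"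
    if "?cl x = d" "\<not> int p dvd y" "?cl y = d" for x y
  proof
    assume "[1 + x = 1 + ?i y] (mod int p)"
    hence "?cl x = ?cl (?i y)"
      using prime_not_dvd_modular_inverse[OF prime that(2)]
      by (simp add: cong_add_lcancel cube_class_cong)
    thus False using cube_class_modular_inverse_eq[OF that(2,3) d] that(1) d by auto
  qed
  consider "?cl (1 + \<alpha>) = 0" "?cl (1 + \<alpha>') = 0" | "?cl (1 + \<alpha>) = 0" "?cl (1 + \<alpha>') \<noteq> 0"
    | "?cl (1 + \<alpha>) \<noteq> 0" "?cl (1 + \<alpha>') = 0" | "?cl (1 + \<alpha>) \<noteq> 0" "?cl (1 + \<alpha>') \<noteq> 0"
    by blast
  hence "[\<alpha> = \<alpha>'] (mod int p)"
  proof cases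
    case 1
    thus ?thesis using eq by (simp add: cube_partner_def cong_add_lcancel)
  next
    case 2
    thus ?thesis using eq mixed residues by (simp add: cube_partner_def)
  next
    case 3
    thus ?thesis using eq mixed residues by (simp add: cube_partner_def cong_sym_eq)
  next
    case 4
    hence "[?i \<alpha> = ?i \<alpha>'] (mod int p)" using eq by (simp add: cube_partner_def cong_add_lcancel)
    thus ?thesis using modular_inverse_cong_imp_cong[OF prime] residues by blast
  qed
  thus ?thesis using cube_class_residues_cong_imp_eq \<alpha> \<alpha>' by blast
qed

lemma card_cube_class_residues_less:
  assumes d: "d = 1 \<or> d = 2"
    and no_step: "\<forall>\<alpha>\<in>cube_class_residues p g d. cube_class p g (1 + \<alpha>) \<noteq> (2 * d) mod 3"
  shows "card (cube_class_residues p g d) < card (cube_class_residues p g 0)"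
proof -
  let ?S = "cube_class_residues p g" and ?h = "\<lambda>\<alpha>. cube_partner \<alpha> mod int p"
  have partner: "\<not> int p dvd cube_partner \<alpha>" "cube_class p g (cube_partner \<alpha>) = 0"
    "\<not> [cube_partner \<alpha> = 1] (mod int p)" if "\<alpha> \<in> ?S d" for \<alpha>
    using cube_partner_cube[OF d that] no_step that by simp_all
  have "inj_on ?h (?S d)"
  proof (rule inj_onI)
    fix \<alpha> \<alpha>' assume "\<alpha> \<in> ?S d" "\<alpha>' \<in> ?S d" and "?h \<alpha> = ?h \<alpha>'"
    thus "\<alpha> = \<alpha>'" using cube_partner_cong_imp_eq[OF d] unfolding cong_def by blast
  qed
  moreover have "?h ` ?S d \<subseteq> ?S 0 - {1}"
  proof
    fix y assume "y \<in> ?h ` ?S d"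
    then obtain \<alpha> where \<alpha>: "\<alpha> \<in> ?S d" and y: "y = cube_partner \<alpha> mod int p" by blast
    have "y \<in> ?S 0" using mod_in_cube_class_residues[OF partner(1)[OF \<alpha>]] partner(2)[OF \<alpha>] y by simp
    moreover have "y \<noteq> 1"
      using partner(3)[OF \<alpha>] prime_gt_1_nat[OF prime] y unfolding cong_def by auto
    ultimately show "y \<in> ?S 0 - {1}" by simp
  qed
  ultimately have "card (?S d) \<le> card (?S 0 - {1})"
    using finite_cube_class_residues by (intro card_inj_on_le) auto
  also have "\<dots> < card (?S 0)"
  proof -
    have "1 \<in> ?S 0"
      using cube_class_one prime_gt_1_nat[OF prime] by (simp add: cube_class_residues_def)
    thus ?thesis using finite_cube_class_residues by (meson card_Diff1_less)
  qed
  finally show ?thesis .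
qed

lemma obtain_cube_class_transition:
  assumes "d = 1 \<or> d = 2"
  obtains \<alpha> where "\<not> int p dvd \<alpha>" and "\<not> int p dvd 1 + \<alpha>"
    and "cube_class p g \<alpha> = d" and "cube_class p g (1 + \<alpha>) = (2 * d) mod 3"
proof -
  have "\<not> card (cube_class_residues p g d) < card (cube_class_residues p g 0)"
    using card_cube_class_residues_0_le[of d] assms by auto
  then obtain \<alpha> where "\<alpha> \<in> cube_class_residues p g d" "cube_class p g (1 + \<alpha>) = (2 * d) mod 3"
    using card_cube_class_residues_less[OF assms] by blast
  thus thesis using that cube_class_residuesD not_dvd_one_plus_if_cube_class_ne_0 assms by force
qed

lemma ternary_cubic_zero_mod_prime_distinct_classes:
  assumes "\<not> int p dvd u1" and "\<not> int p dvd u2" and "\<not> int p dvd u3"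
    and "cube_class p g u1 \<noteq> cube_class p g u2" and "cube_class p g u1 \<noteq> cube_class p g u3"
    and "cube_class p g u2 \<noteq> cube_class p g u3"
  shows "\<exists>y z. int p dvd u1 + u2 * y ^ 3 + u3 * z ^ 3"
proof -
  let ?cl = "cube_class p g"
  define d where "d = (?cl u2 + 3 - ?cl u1) mod 3"
  note cube_class_cases[of p g u1] cube_class_cases[of p g u2] cube_class_cases[of p g u3]
  hence d: "d = 1 \<or> d = 2" and cl2: "?cl u2 = (?cl u1 + d) mod 3"
    and cl3: "?cl u3 = (?cl u1 + 2 * d) mod 3"
    using assms(4-6) unfolding d_def by auto
  obtain \<alpha> where \<alpha>: "\<not> int p dvd \<alpha>" "\<not> int p dvd 1 + \<alpha>" "?cl \<alpha> = d" "?cl (1 + \<alpha>) = (2 * d) mod 3"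
    using obtain_cube_class_transition[OF d] by blast
  have "?cl (u1 * \<alpha>) = ?cl u2"
    using cube_class_mult[OF assms(1) \<alpha>(1)] \<alpha>(3) cl2 by simp
  then obtain y where y: "[u2 * y ^ 3 = u1 * \<alpha>] (mod int p)"
    using cube_class_eq_imp_cube_multiple assms(2) prime_not_dvd_mult[OF prime assms(1) \<alpha>(1)]
    by metis
  have unit: "\<not> int p dvd u1 * (1 + \<alpha>)" using prime_not_dvd_mult[OF prime assms(1) \<alpha>(2)] .
  have "?cl (- (u1 * (1 + \<alpha>))) = ?cl u3"
    using cube_class_uminus[OF unit] cube_class_mult[OF assms(1) \<alpha>(2)] \<alpha>(4) cl3
    by (simp add: mod_add_right_eq)
  then obtain z where z: "[u3 * z ^ 3 = - (u1 * (1 + \<alpha>))] (mod int p)"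
    using cube_class_eq_imp_cube_multiple assms(3) unit by (metis dvd_minus_iff)
  have "[u1 + u2 * y ^ 3 + u3 * z ^ 3 = u1 + u1 * \<alpha> + - (u1 * (1 + \<alpha>))] (mod int p)"
    by (intro cong_add cong_refl y z)
  thus ?thesis by (auto simp: cong_0_iff algebra_simps)
qed

end

section \<open>A zero of the diagonal form modulo \<open>p\<close>\<close>

lemma cubic_sum_zero_mod_prime_of_two_terms:
  fixes u :: "nat \<Rightarrow> int"
  assumes "prime p" and "finite T" and "j \<in> T" and "k \<in> T" and "j \<noteq> k"
    and "[u k * y ^ 3 = - u j] (mod int p)"
  shows "\<exists>x. (\<exists>i\<in>T. \<not> int p dvd x i) \<and> int p dvd (\<Sum>i\<in>T. u i * x i ^ 3)"
proof -
  define x where "x i = (if i = j then 1 else if i = k then y else 0)" for i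
  have "(\<Sum>i\<in>T. u i * x i ^ 3) = (\<Sum>i\<in>{j, k}. u i * x i ^ 3)"
    using assms(2-4) by (intro sum.mono_neutral_right) (auto simp: x_def)
  also have "\<dots> = u k * y ^ 3 - (- u j)" using assms(5) by (simp add: x_def)
  finally have "int p dvd (\<Sum>i\<in>T. u i * x i ^ 3)"
    using assms(6) by (simp add: cong_iff_dvd_diff)
  moreover have "\<not> int p dvd x j" using prime_not_dvd_one[OF assms(1)] by (simp add: x_def)
  ultimately show ?thesis using assms(3) by blast
qed

lemma ternary_cubic_zero_mod_prime:
  fixes u :: "nat \<Rightarrow> int" and T :: "nat set"
  assumes prime: "prime p" and "p \<noteq> 3" and "card T = 3" and units: "\<forall>j\<in>T. \<not> int p dvd u j"
  shows "\<exists>x. (\<exists>j\<in>T. \<not> int p dvd x j) \<and> int p dvd (\<Sum>j\<in>T. u j * x j ^ 3)"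
proof -
  obtain j1 j2 j3 where T: "T = {j1, j2, j3}" and j_distinct: "j1 \<noteq> j2" "j2 \<noteq> j3" "j1 \<noteq> j3"
    using assms(3) by (metis card_3_iff)
  note from_two_terms = cubic_sum_zero_mod_prime_of_two_terms[OF prime, of T]
  have u: "\<not> int p dvd u j1" "\<not> int p dvd u j2" "\<not> int p dvd u j3" using units T by auto
  from prime_mod_3_cases[OF assms(1,2)] show ?thesis
  proof
    assume one_mod_3: "p mod 3 = 1"
    obtain g where g: "residue_primroot p g"
      using prime_primitive_root_exists[OF prime_gt_1_nat[OF prime] prime] by blast
    interpret prime_1_mod_3_primroot p g
      using prime g one_mod_3 by (simp add: prime_1_mod_3_primroot_def)
    consider (two_equal) j k
        where "j \<in> T" "k \<in> T" "j \<noteq> k" "cube_class p g (u j) = cube_class p g (u k)"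
      | (all_distinct) "cube_class p g (u j1) \<noteq> cube_class p g (u j2)"
        "cube_class p g (u j1) \<noteq> cube_class p g (u j3)"
        "cube_class p g (u j2) \<noteq> cube_class p g (u j3)"
    proof -
      have "j1 \<in> T" "j2 \<in> T" "j3 \<in> T" using T by auto
      thus thesis using that j_distinct by metis
    qed
    thus ?thesis
    proof cases
      case two_equal
      then obtain y where "[u k * y ^ 3 = - u j] (mod int p)"
        using cube_class_eq_imp_cube_multiple cube_class_uminus units by (metis dvd_minus_iff)
      thus ?thesis using from_two_terms two_equal T by blast
    next
      case all_distinct
      then obtain y z where yz: "int p dvd u j1 + u j2 * y ^ 3 + u j3 * z ^ 3"
        using ternary_cubic_zero_mod_prime_distinct_classes u by blast
      define x where "x i = (if i = j1 then 1 else if i = j2 then y else z)" for i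
      have "(\<Sum>i\<in>T. u i * x i ^ 3) = u j1 + u j2 * y ^ 3 + u j3 * z ^ 3"
        using j_distinct by (simp add: T x_def)
      moreover have "\<not> int p dvd x j1" using prime_not_dvd_one[OF prime] by (simp add: x_def)
      ultimately show ?thesis using yz T by auto
    qed
  next
    assume "p mod 3 = 2"
    then obtain y where "[u j2 * y ^ 3 = - u j1] (mod int p)"
      using cube_multiple_mod_prime_2_mod_3[OF prime _ u(2)] u(1) by (metis dvd_minus_iff)
    thus ?thesis using from_two_terms[of j1 j2] T j_distinct by simp
  qed
qed

lemma obtain_three_congruent_mod_3:
  fixes v :: "nat \<Rightarrow> nat"
  assumes "finite A" and "card A \<ge> 7"
  obtains T where "T \<subseteq> A" and "card T = 3" and "\<forall>i\<in>T. \<forall>j\<in>T. v i mod 3 = v j mod 3"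
proof -
  let ?f = "\<lambda>j. v j mod 3"
  have "\<exists>c\<in>{..<3}. card (?f -` {c} \<inter> A) * card {..<3::nat} \<ge> card A"
    by (rule pigeonhole_card) (use assms(1) in \<open>auto simp: set_eq_iff intro!: exI[of _ 0]\<close>)
  then obtain c where "card (?f -` {c} \<inter> A) * card {..<3::nat} \<ge> card A" by blast
  hence "3 \<le> card (?f -` {c} \<inter> A)" using assms(2) by simp
  then obtain T where "T \<subseteq> ?f -` {c} \<inter> A" and "card T = 3" by (meson obtain_subset_with_card_n)
  thus thesis using that by auto
qed

lemma obtain_common_shift_mod_3:
  fixes v :: "nat \<Rightarrow> nat"
  assumes "finite T" and "\<forall>i\<in>T. \<forall>j\<in>T. v i mod 3 = v j mod 3"
  obtains V s where "\<forall>j\<in>T. v j + 3 * s j = V"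
proof -
  define V where "V = Max (v ` T)"
  have "v j + 3 * ((V - v j) div 3) = V" if "j \<in> T" for j
  proof -
    have "v j \<le> V" unfolding V_def using assms(1) that by (intro Max_ge) auto
    have "V \<in> v ` T" unfolding V_def using assms(1) that by (intro Max_in) auto
    hence "v j mod 3 = V mod 3" using assms(2) that by blast
    hence "3 dvd V - v j" using mod_eq_dvd_iff_nat[OF \<open>v j \<le> V\<close>, of 3] by simp
    thus ?thesis using \<open>v j \<le> V\<close> by simp
  qed
  thus thesis using that[where V = V and s = "\<lambda>j. (V - v j) div 3"] by blast
qed

lemma diag_cubic_rescale:
  assumes "T \<subseteq> {..<r}" and "\<forall>j\<in>T. a j * c j ^ 3 = P * b j"
  shows "diag_cubic r a (\<lambda>j. if j \<in> T then c j * x j else 0) = P * (\<Sum>j\<in>T. b j * x j ^ 3)"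
proof -
  have "diag_cubic r a (\<lambda>j. if j \<in> T then c j * x j else 0) = (\<Sum>j\<in>T. a j * c j ^ 3 * x j ^ 3)"
    unfolding diag_cubic_def using assms(1)
    by (intro sum.mono_neutral_cong_right) (auto simp: power_mult_distrib)
  also have "\<dots> = P * (\<Sum>j\<in>T. b j * x j ^ 3)"
    using assms(2) by (simp add: sum_distrib_left mult.assoc)
  finally show ?thesis .
qed

lemma diag_cubic_exists_liftable_zero_mod_p:
  fixes a :: "nat \<Rightarrow> int"
  assumes prime: "prime p" and "p \<noteq> 3" and "r \<ge> 7" and nonzero: "\<forall>i<r. a i \<noteq> 0"
  shows "\<exists>i e u w. i < r \<and> a i * w i ^ 3 = int p ^ e * u \<and> \<not> int p dvd u \<and>
    int p ^ (e + 1) dvd diag_cubic r a w"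
proof -
  define v where "v i = multiplicity (int p) (a i)" for i
  define b where "b i = a i div int p ^ v i" for i
  have not_unit: "\<not> is_unit (int p)" using prime_gt_1_nat[OF prime] by simp
  have a: "a i = int p ^ v i * b i" and b: "\<not> int p dvd b i" if "i < r" for i
  proof -
    show "a i = int p ^ v i * b i" unfolding b_def v_def by (simp add: multiplicity_dvd)
    show "\<not> int p dvd b i"
      using multiplicity_decompose[of "a i" "int p"] nonzero that not_unit
      unfolding b_def v_def by blast
  qed
  obtain T where T: "T \<subseteq> {..<r}" "card T = 3" and "\<forall>i\<in>T. \<forall>j\<in>T. v i mod 3 = v j mod 3"
    using obtain_three_congruent_mod_3[of "{..<r}" v] assms(3) by auto
  moreover have "finite T" using T(2) by (intro card_ge_0_finite) simp
  ultimately obtain V s where shift: "\<forall>j\<in>T. v j + 3 * s j = V"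
    using obtain_common_shift_mod_3 by metis
  have scaled: "\<forall>j\<in>T. a j * (int p ^ s j) ^ 3 = int p ^ V * b j"
  proof
    fix j assume "j \<in> T"
    have "(int p ^ s j) ^ 3 = int p ^ (3 * s j)"
      by (subst mult.commute) (rule power_mult[symmetric])
    thus "a j * (int p ^ s j) ^ 3 = int p ^ V * b j"
      using a[of j] shift \<open>j \<in> T\<close> T(1) by (auto simp: power_add[symmetric])
  qed
  have "\<forall>j\<in>T. \<not> int p dvd b j" using b T(1) by auto
  then obtain x where x: "\<exists>j\<in>T. \<not> int p dvd x j" and zero: "int p dvd (\<Sum>j\<in>T. b j * x j ^ 3)"
    using ternary_cubic_zero_mod_prime[OF prime assms(2) T(2)] by blast
  define w where "w j = (if j \<in> T then int p ^ s j * x j else 0)" for j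
  have "diag_cubic r a w = int p ^ V * (\<Sum>j\<in>T. b j * x j ^ 3)"
    unfolding w_def using diag_cubic_rescale[OF T(1) scaled] .
  hence "int p ^ (V + 1) dvd diag_cubic r a w"
    using zero by (simp add: mult_dvd_mono)
  moreover obtain j where j: "j \<in> T" "\<not> int p dvd x j" using x by blast
  moreover have "a j * w j ^ 3 = int p ^ V * (b j * x j ^ 3)"
    using scaled j(1) by (simp add: w_def power_mult_distrib mult.assoc[symmetric])
  moreover have "\<not> int p dvd b j * x j ^ 3"
    using prime_not_dvd_mult[OF prime b] j T(1) prime by (auto simp: prime_dvd_power_iff)
  ultimately show ?thesis using T(1) j(1) by blast
qed

section \<open>Hensel lifting\<close>

lemma diag_cubic_upd:
  assumes "i < r"
  shows "diag_cubic r a (w(i := t)) = diag_cubic r a w - a i * w i ^ 3 + a i * t ^ 3"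
proof -
  have "diag_cubic r a v = a i * v i ^ 3 + (\<Sum>j\<in>{..<r} - {i}. a j * v j ^ 3)" for v
    unfolding diag_cubic_def using assms by (subst sum.remove[of _ i]) auto
  thus ?thesis by simp
qed

lemma diag_cubic_perturb:
  assumes "i < r" and "a i * w i ^ 3 = E * u" and "diag_cubic r a w = E * P * c"
  shows "diag_cubic r a (w(i := w i * (1 + P * t))) =
    E * P * (c + 3 * u * t + P * (3 * u * t ^ 2 + P * u * t ^ 3))"
proof -
  have "diag_cubic r a (w(i := w i * (1 + P * t))) =
      diag_cubic r a w - a i * w i ^ 3 + a i * (w i * (1 + P * t)) ^ 3"
    by (rule diag_cubic_upd[OF assms(1)])
  also have "\<dots> = diag_cubic r a w + a i * w i ^ 3 * ((1 + P * t) ^ 3 - 1)"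
    by (simp add: power_mult_distrib right_diff_distrib)
  finally show ?thesis
    unfolding assms(2,3) by (simp add: power3_eq_cube power2_eq_square algebra_simps)
qed

lemma diag_cubic_hensel_step:
  assumes prime: "prime p" and "p \<noteq> 3" and "i < r" and "K \<ge> 1"
    and dominant: "a i * w i ^ 3 = int p ^ e * u" and unit: "\<not> int p dvd u"
    and "int p ^ (e + K) dvd diag_cubic r a w"
  shows "\<exists>w' u'. a i * w' i ^ 3 = int p ^ e * u' \<and> \<not> int p dvd u' \<and>
    int p ^ (e + Suc K) dvd diag_cubic r a w'"
proof -
  define P where "P = int p ^ K"
  from assms(7) obtain c where "diag_cubic r a w = int p ^ (e + K) * c" by (rule dvdE)
  hence c: "diag_cubic r a w = int p ^ e * P * c" by (simp add: P_def power_add)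
  have unit3: "\<not> int p dvd 3 * u"
    using prime_not_dvd_mult[OF prime prime_not_dvd_3 unit] assms(2) prime by blast
  define s where "s = - c * modular_inverse (int p) (3 * u)"
  have "[c + 3 * u * s = c + - c * (3 * u * modular_inverse (int p) (3 * u))] (mod int p)"
    by (simp add: s_def algebra_simps)
  also have "[c + - c * (3 * u * modular_inverse (int p) (3 * u)) = c + - c * 1] (mod int p)"
    using cong_modular_inverse_prime[OF prime unit3] by (intro cong_add cong_mult cong_refl)
  finally have "int p dvd c + 3 * u * s" by (simp add: cong_0_iff)
  moreover have "int p dvd P" using assms(4) by (simp add: P_def)
  ultimately have "int p dvd c + 3 * u * s + P * (3 * u * s ^ 2 + P * u * s ^ 3)" by simp
  hence "int p ^ (e + Suc K) dvd
      int p ^ e * P * (c + 3 * u * s + P * (3 * u * s ^ 2 + P * u * s ^ 3))"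
    by (auto simp: P_def power_add intro: mult_dvd_mono)
  moreover have "\<not> int p dvd 1 + P * s"
    using \<open>int p dvd P\<close> prime_gt_1_nat[OF prime] by (simp add: dvd_add_left_iff)
  hence "\<not> int p dvd u * (1 + P * s) ^ 3"
    using prime_not_dvd_mult[OF prime unit] prime by (simp add: prime_dvd_power_iff)
  ultimately show ?thesis
    using diag_cubic_perturb[OF assms(3) dominant c, of s]
    by (intro exI[of _ "w(i := w i * (1 + P * s))"] exI[of _ "u * (1 + P * s) ^ 3"])
       (simp add: dominant power_mult_distrib)
qed

lemma diag_cubic_hensel_lift:
  assumes "prime p" and "p \<noteq> 3" and "i < r"
    and "a i * w i ^ 3 = int p ^ e * u" and "\<not> int p dvd u"
    and "int p ^ (e + 1) dvd diag_cubic r a w" and "K \<ge> 1"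
  shows "\<exists>w' u'. a i * w' i ^ 3 = int p ^ e * u' \<and> \<not> int p dvd u' \<and>
    int p ^ (e + K) dvd diag_cubic r a w'"
  using assms(7)
proof (induction K rule: dec_induct)
  case base
  thus ?case using assms(4-6) by blast
next
  case (step K)
  thus ?case using diag_cubic_hensel_step[OF assms(1-3)] by blast
qed

section \<open>\<open>p\<close>-adic approximation\<close>

lemma padic_abs_power_mult_div_le:
  fixes Z D :: int
  assumes prime: "prime p" and D: "\<not> int p dvd D"
  shows "padic_abs p (of_int (int p ^ j * Z) / of_int D) \<le> 1 / real p ^ j"
proof (cases "Z = 0")
  case True
  thus ?thesis by (simp add: padic_abs_def)
next
  case False
  define q where "q = (of_int (int p ^ j * Z) / of_int D :: rat)"
  have "D \<noteq> 0" using D by auto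
  hence q0: "q \<noteq> 0" using False prime by (auto simp: q_def prime_gt_0_nat)
  obtain A B where AB: "quotient_of q = (A, B)" by (cases "quotient_of q")
  have "B > 0" and "coprime A B" and qAB: "q = of_int A / of_int B"
    using AB quotient_of_denom_pos quotient_of_coprime quotient_of_div by blast+
  have eq: "A * D = int p ^ j * Z * B"
  proof -
    have "(of_int A / of_int B :: rat) = of_int (int p ^ j * Z) / of_int D" using qAB q_def by simp
    hence "(of_int (A * D) :: rat) = of_int (int p ^ j * Z * B)"
      using \<open>B > 0\<close> \<open>D \<noteq> 0\<close> by (simp add: field_simps)
    thus ?thesis by (simp only: of_int_eq_iff)
  qed
  have "B dvd D" using eq \<open>coprime A B\<close>
    by (metis coprime_commute coprime_dvd_mult_right_iff dvd_triv_right)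
  hence "\<not> int p dvd B" using D dvd_trans by blast
  hence mult_B: "multiplicity (int p) B = 0" by (simp add: not_dvd_imp_multiplicity_0)
  have "coprime (int p ^ j) D"
    using coprime_if_not_prime_dvd[OF prime D] by (simp add: coprime_commute)
  hence "int p ^ j dvd A" using eq by (metis coprime_dvd_mult_left_iff dvd_triv_left mult.assoc)
  moreover have "A \<noteq> 0" using qAB q0 by auto
  ultimately have "multiplicity (int p) A \<ge> j"
    using prime by (intro multiplicity_geI) auto
  hence "padic_val p q \<ge> int j" unfolding padic_val_def AB using mult_B by simp
  moreover have "real p > 1" using prime prime_gt_1_nat by auto
  ultimately have "real p powr (- real_of_int (padic_val p q)) \<le> real p powr (- real j)"
    by (intro powr_mono) auto
  thus ?thesis
    using q0 \<open>real p > 1\<close> by (simp add: padic_abs_def q_def powr_minus powr_realpow divide_inverse)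
qed

(* X/Y - m/n = p^M (n Rm - m Rn) / (n Y), and since j >= 1 the denominator n Y has valuation
   exactly 2 v_p(n). *)
lemma padic_abs_ratio_approx:
  fixes U m n Rm Rn :: int
  assumes prime: "prime p" and U: "\<not> int p dvd U" and "n \<noteq> 0" and "j \<ge> 1"
    and M: "M = 2 * multiplicity (int p) n + j"
  shows "U * n + int p ^ M * Rn \<noteq> 0"
    and "padic_abs p (of_int (U * m + int p ^ M * Rm) / of_int (U * n + int p ^ M * Rn)
           - of_int m / of_int n) \<le> 1 / real p ^ j"
proof -
  define k where "k = multiplicity (int p) n"
  obtain n' where n': "n = int p ^ k * n'" and n'_unit: "\<not> int p dvd n'"
    using multiplicity_decompose'[of n "int p"] assms(3) prime_gt_1_nat[OF prime]
    unfolding k_def by auto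
  define Y' where "Y' = U * n' + int p ^ (k + j) * Rn"
  have "int p dvd int p ^ (k + j)" using assms(4) by simp
  hence Y'_unit: "\<not> int p dvd Y'"
    using prime_not_dvd_mult[OF prime U n'_unit] by (auto simp: Y'_def dvd_add_left_iff)
  have M': "M = k + (k + j)" using M by (simp add: k_def)
  have Y: "U * n + int p ^ M * Rn = int p ^ k * Y'"
    by (simp add: M' Y'_def n' power_add algebra_simps)
  have "int p ^ k \<noteq> 0" "Y' \<noteq> 0" "n' \<noteq> 0" using prime Y'_unit n'_unit by auto
  thus nonzero: "U * n + int p ^ M * Rn \<noteq> 0" using Y by simp
  have num: "(U * m + int p ^ M * Rm) * n - m * (U * n + int p ^ M * Rn)
      = int p ^ k * int p ^ k * (int p ^ j * (n * Rm - m * Rn))"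
    by (simp add: M' power_add algebra_simps)
  have den: "(U * n + int p ^ M * Rn) * n = int p ^ k * int p ^ k * (Y' * n')"
    unfolding Y by (simp add: n' algebra_simps)
  have "(of_int (U * m + int p ^ M * Rm) / of_int (U * n + int p ^ M * Rn)
        - of_int m / of_int n :: rat)
      = of_int ((U * m + int p ^ M * Rm) * n - m * (U * n + int p ^ M * Rn))
        / of_int ((U * n + int p ^ M * Rn) * n)"
  proof -
    have "(of_int (U * n + int p ^ M * Rn) :: rat) \<noteq> 0" "(of_int n :: rat) \<noteq> 0"
      using nonzero assms(3) by (simp_all only: of_int_eq_0_iff not_False_eq_True)
    thus ?thesis unfolding of_int_mult of_int_diff by (rule diff_frac_eq)
  qed
  also have "\<dots> = of_int (int p ^ j * (n * Rm - m * Rn)) / of_int (Y' * n')"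
    unfolding num den using \<open>int p ^ k \<noteq> 0\<close>
    by (simp only: of_int_mult mult.assoc mult_divide_mult_cancel_left of_int_eq_0_iff
        not_False_eq_True)
  finally show "padic_abs p (of_int (U * m + int p ^ M * Rm) / of_int (U * n + int p ^ M * Rn)
      - of_int m / of_int n) \<le> 1 / real p ^ j"
    using padic_abs_power_mult_div_le[OF prime prime_not_dvd_mult[OF prime Y'_unit n'_unit]]
    by (simp only:)
qed

lemma ratio_set_diag_cubic_approx:
  assumes prime: "prime p" and "p \<noteq> 3" and "i < r"
    and "a i * w i ^ 3 = int p ^ e * u" and "\<not> int p dvd u"
    and "int p ^ (e + 1) dvd diag_cubic r a w"
    and "n \<noteq> 0" and "j \<ge> 1"
  shows "\<exists>s\<in>ratio_set (diag_cubic r a). padic_abs p (s - of_int m / of_int n) \<le> 1 / real p ^ j"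
proof -
  define M where "M = 2 * multiplicity (int p) n + j"
  obtain w' u' where dominant: "a i * w' i ^ 3 = int p ^ e * u'" and unit: "\<not> int p dvd u'"
    and "int p ^ (e + 2 * M) dvd diag_cubic r a w'"
    using diag_cubic_hensel_lift[OF assms(1-6), of "2 * M"] assms(8) by (auto simp: M_def)
  then obtain c where "diag_cubic r a w' = int p ^ (e + 2 * M) * c" by (elim dvdE)
  hence c: "diag_cubic r a w' = int p ^ e * int p ^ M * (int p ^ M * c)"
    by (simp add: power_add power_mult power2_eq_square mult_ac)
  define R where "R t = c + 3 * u' * t ^ 2 + int p ^ M * u' * t ^ 3" for t
  define x where "x t = w'(i := w' i * (1 + int p ^ M * t))" for t
  have perturbed:
    "diag_cubic r a (x t) = int p ^ e * int p ^ M * (3 * u' * t + int p ^ M * R t)" for t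
    using diag_cubic_perturb[OF assms(3) dominant c, of t] by (simp add: x_def R_def algebra_simps)
  have "\<not> int p dvd 3 * u'"
    using prime_not_dvd_mult[OF prime prime_not_dvd_3 unit] prime assms(2) by blast
  hence approx: "3 * u' * n + int p ^ M * R n \<noteq> 0"
    "padic_abs p (of_int (3 * u' * m + int p ^ M * R m) / of_int (3 * u' * n + int p ^ M * R n)
       - of_int m / of_int n) \<le> 1 / real p ^ j"
    using padic_abs_ratio_approx[OF prime _ assms(7,8) M_def] by blast+
  have "p > 0" using prime prime_gt_0_nat by blast
  hence "diag_cubic r a (x n) \<noteq> 0" using approx(1) by (simp add: perturbed)
  moreover have ratio: "of_int (diag_cubic r a (x m)) / of_int (diag_cubic r a (x n))
      = (of_int (3 * u' * m + int p ^ M * R m) / of_int (3 * u' * n + int p ^ M * R n) :: rat)"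
    unfolding perturbed of_int_mult[of "int p ^ e * int p ^ M"]
    by (rule mult_divide_mult_cancel_left) (use \<open>p > 0\<close> in simp)
  ultimately have "of_int (diag_cubic r a (x m)) / of_int (diag_cubic r a (x n))
      \<in> ratio_set (diag_cubic r a)"
    unfolding ratio_set_def by blast
  with approx(2) show ?thesis unfolding ratio by blast
qed

lemma padic_dense_ratio_set_diag_cubic:
  assumes prime: "prime p" and "p \<noteq> 3" and "i < r"
    and "a i * w i ^ 3 = int p ^ e * u" and "\<not> int p dvd u"
    and "int p ^ (e + 1) dvd diag_cubic r a w"
  shows "padic_dense p (ratio_set (diag_cubic r a))"
  unfolding padic_dense_def
proof (intro allI impI)
  fix q :: rat and \<epsilon> :: real
  assume "\<epsilon> > 0"
  have p1: "real p > 1" using prime prime_gt_1_nat by auto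
  obtain N where N: "1 / \<epsilon> < real p ^ N" using real_arch_pow[OF p1] by blast
  have "1 / real p ^ Suc N < \<epsilon>"
  proof -
    have "real p ^ N \<le> real p ^ Suc N" using p1 by (intro power_increasing) auto
    hence "1 / \<epsilon> < real p ^ Suc N" using N by linarith
    moreover have "real p ^ Suc N > 0" using p1 by simp
    ultimately show ?thesis using \<open>\<epsilon> > 0\<close> by (simp add: field_simps)
  qed
  obtain m n where "quotient_of q = (m, n)" by (cases "quotient_of q")
  hence "q = of_int m / of_int n" and "n \<noteq> 0"
    using quotient_of_div quotient_of_denom_pos by fastforce+
  then obtain s where "s \<in> ratio_set (diag_cubic r a)"
    and "padic_abs p (s - q) \<le> 1 / real p ^ Suc N"
    using ratio_set_diag_cubic_approx[OF assms, of n "Suc N" m] by auto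
  with \<open>1 / real p ^ Suc N < \<epsilon>\<close> show "\<exists>s\<in>ratio_set (diag_cubic r a). padic_abs p (s - q) < \<epsilon>"
    by (meson order.strict_trans1)
qed

theorem corollary1p7:
  fixes p r :: nat and a :: "nat \<Rightarrow> int"
  assumes "prime p" and "p \<noteq> 3" and "r \<ge> 7"
    and "(\<Prod>i<r. a i) \<noteq> 0"
  shows "padic_dense p (ratio_set (diag_cubic r a))"
proof -
  have "\<forall>i<r. a i \<noteq> 0" using assms(4) by simp
  then obtain i e u w where "i < r" and "a i * w i ^ 3 = int p ^ e * u" and "\<not> int p dvd u"
    and "int p ^ (e + 1) dvd diag_cubic r a w"
    using diag_cubic_exists_liftable_zero_mod_p[OF assms(1-3)] by blast
  thus ?thesis using padic_dense_ratio_set_diag_cubic[OF assms(1,2)] by blast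
qed

end
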